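(* Suppose $G\in\tilde{\mathcal C}$ is of the form $G(\psi)=q(M^\gamma_{\mathrm{ref}}(\psi)(h_0),\dots,M^\gamma_{\mathrm{ref}}(\psi)(h_k))$ and $h\in E$ is continuous. Then for $\mu_{\mathrm{ref}}$-a.e. $\psi$, $D_hG(\psi)=\gamma\sum_{i=0}^k\partial_iq\big(M^\gamma_{\mathrm{ref}}(\psi)(h_0),\dots,M^\gamma_{\mathrm{ref}}(\psi)(h_k)\big)\,M^\gamma_{\mathrm{ref}}(\psi)(h_ih)$. Moreover, if $G\in\mathcal C$ then for every continuous $h\in E$ there is a constant $C$ depending only on $G$ and $h$ such that $|D_hG(\psi)|\le C$ for $\mu_{\mathrm{ref}}$-a.e. $\psi$.
   Context: $M$ closed manifold of even dimension $n$ with metric $g_{\mathrm{ref}}$, volume $\omega_{\mathrm{ref}}$, co-polyharmonic (GJMS) operator $P_{\mathrm{ref}}$ (non-negative, self-adjoint, kernel the constants); $a_n=\frac{2}{(n/2-1)!(4\pi)^{n/2}}$, $p_{\mathrm{ref}}=a_nP_{\mathrm{ref}}$; $H^s_{\mathrm{ref}}=(1+p_{\mathrm{ref}})^{-s/n}L^2(\omega_{\mathrm{ref}})$ (completion for $s<0$), $H^{0-}_{\mathrm{ref}}=\bigcap_{s>0}H^{-s}_{\mathrm{ref}}$, $\mathring{}$ denotes mean-zero subspaces. $\mu_{\mathrm{ref}}$: centered Gaussian measure on $\mathring H^{0-}_{\mathrm{ref}}$ with covariance kernel the Green kernel of $p_{\mathrm{ref}}$ on mean-zero functions. $\gamma\in[0,\sqrt{2n})$;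 $M^\gamma_{\mathrm{ref}}$ is the co-polyharmonic GMC map into finite Borel measures on $M$, satisfying $M^\gamma_{\mathrm{ref}}(\psi+h)=e^{\gamma h}M^\gamma_{\mathrm{ref}}(\psi)$ for $\mu_{\mathrm{ref}}$-a.e. $\psi$ and $h\in\mathring H^{n/2}_{\mathrm{ref}}$, and $M^\gamma_{\mathrm{ref}}(\psi+c)=e^{\gamma c}M^\gamma_{\mathrm{ref}}(\psi)$. $E=H^{n/2}_{\mathrm{ref}}$. $\tilde{\mathcal C}$: functionals $G(\psi)=q(M^\gamma_{\mathrm{ref}}(\psi)(h_0),\dots,M^\gamma_{\mathrm{ref}}(\psi)(h_k))$ with $q\in C^2(\mathbb R^{k+1})$, $h_i\in C^\infty(M)$, $h_0\equiv1$; $\mathcal C\subset\tilde{\mathcal C}$: those where $q$ can be chosen supported in $(\epsilon,\epsilon^{-1})\times K$ for some $\epsilon>0$, compact $K\subset\mathbb R^k$. $D_hG(\psi)=\frac{d}{dt}G(\psi+th)|_{t=0}$; $\mu(h)=\int h\,d\mu$. *)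

theory Defs
  imports "HOL-Probability.Probability"
begin

text \<open>Abstract setting: points of the closed manifold have type 'm, the field
  (distribution) space H^{0-}_ref is an abstract real vector space 'f into which
  the function space E = H^{n/2}_ref is embedded by a map iota.\<close>

text \<open>q in C^2(R^{k+1}); the k+1 coordinates are indexed by a finite type 'n.\<close>
definition C2_fun :: "(real^'n \<Rightarrow> real) \<Rightarrow> bool" where
  "C2_fun q \<longleftrightarrow>
     (\<exists>D. (\<forall>x. (q has_derivative blinfun_apply (D x)) (at x)) \<and>
          (\<exists>D2. (\<forall>x. (D has_derivative blinfun_apply (D2 x)) (at x)) \<and>
                continuous_on UNIV D2))"

definition partial_q :: "(real^'n \<Rightarrow> real) \<Rightarrow> 'n \<Rightarrow> real^'n \<Rightarrow> real" where
  "partial_q q i x = frechet_derivative q (at x) (axis i 1)"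

definition cyl_functional ::
  "(real^'n \<Rightarrow> real) \<Rightarrow> ('n \<Rightarrow> 'm \<Rightarrow> real) \<Rightarrow> ('f \<Rightarrow> 'm measure) \<Rightarrow> 'f \<Rightarrow> real" where
  "cyl_functional q hs Mg \<psi> = q (\<chi> i. integral\<^sup>L (Mg \<psi>) (hs i))"

definition dir_deriv :: "('f::real_vector \<Rightarrow> real) \<Rightarrow> 'f \<Rightarrow> 'f \<Rightarrow> real" where
  "dir_deriv G v \<psi> = deriv (\<lambda>t. G (\<psi> + t *\<^sub>R v)) 0"

text \<open>Membership of the representation in the class C: q supported in
  (eps, 1/eps) x K for a compact K (coordinate i0 is the one with h_{i0} = 1;
  K is taken inside the hyperplane x_{i0} = 0, identified with R^k).\<close>
definition supp_class_C :: "(real^'n \<Rightarrow> real) \<Rightarrow> 'n \<Rightarrow> bool" where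
  "supp_class_C q i0 \<longleftrightarrow>
     (\<exists>\<epsilon>>0. \<exists>K. compact K \<and>
        closure {x. q x \<noteq> 0} \<subseteq>
          {x. \<epsilon> < x $ i0 \<and> x $ i0 < 1 / \<epsilon> \<and> (\<chi> j. if j = i0 then 0 else x $ j) \<in> K})"

end

theory Submission
  imports Defs
begin

text \<open>Shifting the field by \<open>t h\<close> tilts the chaos measure by the density \<open>exp (\<gamma> t h)\<close>:
  the mean-zero part of \<open>h\<close> is handled by the Cameron-Martin shift rule, the mean by the
  rule for constants. Hence every coordinate \<open>M(\<psi> + t h)(h\<^sub>i) = \<integral> exp (\<gamma> t h) h\<^sub>i dM(\<psi>)\<close>
  is differentiable in \<open>t\<close> with derivative \<open>\<gamma> M(\<psi>)(h\<^sub>i h)\<close> at \<open>0\<close>, and the chain rule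
  gives the formula for \<open>D\<^sub>h G\<close>. For \<open>G\<close> in the class \<open>C\<close> the support of \<open>q\<close> is compact, so
  the partial derivatives of \<open>q\<close> are bounded, and they vanish unless the total mass
  \<open>M(\<psi>)(1)\<close> is below \<open>1/\<epsilon>\<close>, which in turn bounds every \<open>M(\<psi>)(h\<^sub>i h)\<close>.
  Only these two shift rules of the chaos enter; the restrictions on \<open>n\<close> and \<open>\<gamma>\<close> serve
  its construction.\<close>

lemma abs_exp_minus_one_minus_le:
  fixes u :: real
  shows "\<bar>exp u - 1 - u\<bar> \<le> exp \<bar>u\<bar> * u\<^sup>2"
proof -
  obtain t where t: "\<bar>t\<bar> \<le> \<bar>u\<bar>" "exp u = (\<Sum>m<2. u ^ m / fact m) + exp t / fact 2 * u\<^sup>2"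
    using Maclaurin_exp_le[of u 2] by blast
  then have "exp u - 1 - u = exp t / 2 * u\<^sup>2"
    by (simp add: numeral_2_eq_2)
  moreover have "exp t / 2 * u\<^sup>2 \<le> exp \<bar>u\<bar> * u\<^sup>2"
    using t(1) exp_gt_zero[of t] exp_le_cancel_iff[of t "\<bar>u\<bar>"]
    by (intro mult_right_mono) (linarith, simp)
  moreover have "0 \<le> exp t / 2 * u\<^sup>2"
    by simp
  ultimately show ?thesis
    by (metis abs_of_nonneg)
qed

lemma has_real_derivative_at_0_quadratic_remainder:
  fixes F :: "real \<Rightarrow> real"
  assumes rem: "\<And>t. \<bar>t\<bar> \<le> 1 \<Longrightarrow> \<bar>F t - F 0 - t * D\<bar> \<le> K * t\<^sup>2"
  shows "(F has_real_derivative D) (at 0)"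
proof -
  have "((\<lambda>t. (F t - F 0 - t * D) / t) \<longlongrightarrow> 0) (at 0)"
  proof (rule Lim_null_comparison)
    have "norm ((F t - F 0 - t * D) / t) \<le> K * \<bar>t\<bar>" if "t \<noteq> 0" "\<bar>t\<bar> \<le> 1" for t
    proof -
      have "norm ((F t - F 0 - t * D) / t) \<le> K * t\<^sup>2 / \<bar>t\<bar>"
        using rem[OF that(2)] by (simp add: divide_right_mono)
      also have "\<dots> = K * \<bar>t\<bar>"
        using that(1) by (simp add: power2_eq_square field_simps)
      finally show ?thesis .
    qed
    then show "\<forall>\<^sub>F t in at 0. norm ((F t - F 0 - t * D) / t) \<le> K * \<bar>t\<bar>"
      unfolding eventually_at by (intro exI[of _ 1]) auto
    show "((\<lambda>t. K * \<bar>t\<bar>) \<longlongrightarrow> 0) (at 0)"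
      using tendsto_mult_right_zero[OF tendsto_rabs_zero[OF tendsto_ident_at]] by simp
  qed
  then have "((\<lambda>t. D + (F t - F 0 - t * D) / t) \<longlongrightarrow> D) (at 0)"
    using tendsto_add[OF tendsto_const] by fastforce
  moreover have "\<forall>\<^sub>F t in at 0. D + (F t - F 0 - t * D) / t = (F t - F 0) / (t - 0)"
    unfolding eventually_at by (intro exI[of _ 1]) (auto simp: field_simps)
  ultimately show ?thesis
    unfolding has_field_derivative_iff by (simp add: tendsto_cong)
qed

lemma (in finite_measure) abs_integral_le_bound_measure:
  fixes f :: "'a \<Rightarrow> real"
  assumes "f \<in> borel_measurable M" "\<And>x. \<bar>f x\<bar> \<le> B"
  shows "\<bar>\<integral>x. f x \<partial>M\<bar> \<le> B * measure M (space M)"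
proof -
  have "integrable M f"
    using assms by (intro integrable_const_bound[where B=B]) auto
  then have "\<bar>\<integral>x. f x \<partial>M\<bar> \<le> (\<integral>x. B \<partial>M)"
    using assms(2) by (intro order.trans[OF integral_abs_bound integral_mono]) auto
  then show ?thesis by (simp add: mult.commute)
qed

lemma (in finite_measure) has_real_derivative_integral_exp_mult:
  fixes f g :: "'a \<Rightarrow> real"
  assumes [measurable]: "f \<in> borel_measurable M" "g \<in> borel_measurable M"
    and f_bound: "\<And>x. \<bar>f x\<bar> \<le> Bf" and g_bound: "\<And>x. \<bar>g x\<bar> \<le> Bg"
  shows "((\<lambda>t. \<integral>x. exp (c * t * g x) * f x \<partial>M) has_real_derivative
           c * (\<integral>x. f x * g x \<partial>M)) (at 0)"
proof (rule has_real_derivative_at_0_quadratic_remainder)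
  fix t :: real assume t: "\<bar>t\<bar> \<le> 1"
  define K where "K = Bf * exp (\<bar>c\<bar> * Bg) * c\<^sup>2 * Bg\<^sup>2"
  have abs_ctg: "\<bar>c * t * g x\<bar> \<le> \<bar>c\<bar> * Bg" for x
    using t g_bound[of x] unfolding abs_mult
    by (metis abs_ge_zero mult.assoc mult_left_le_one_le mult_left_mono order.trans)
  have remainder_bound: "\<bar>f x * (exp (c * t * g x) - 1 - c * t * g x)\<bar> \<le> K * t\<^sup>2" for x
  proof -
    have "\<bar>c * t * g x\<bar> \<le> \<bar>c\<bar> * Bg * \<bar>t\<bar>"
      using g_bound[of x] mult_left_mono[of "\<bar>g x\<bar>" Bg "\<bar>c\<bar> * \<bar>t\<bar>"]
      by (simp add: abs_mult ac_simps)
    then have "\<bar>c * t * g x\<bar>\<^sup>2 \<le> (\<bar>c\<bar> * Bg * \<bar>t\<bar>)\<^sup>2"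
      by (rule power_mono) simp
    then have square_bound: "(c * t * g x)\<^sup>2 \<le> c\<^sup>2 * Bg\<^sup>2 * t\<^sup>2"
      by (simp add: power_mult_distrib)
    have "\<bar>exp (c * t * g x) - 1 - c * t * g x\<bar> \<le> exp \<bar>c * t * g x\<bar> * (c * t * g x)\<^sup>2"
      by (rule abs_exp_minus_one_minus_le)
    also have "\<dots> \<le> exp (\<bar>c\<bar> * Bg) * (c\<^sup>2 * Bg\<^sup>2 * t\<^sup>2)"
      using abs_ctg[of x] square_bound by (intro mult_mono) auto
    finally have "\<bar>f x\<bar> * \<bar>exp (c * t * g x) - 1 - c * t * g x\<bar>
        \<le> Bf * (exp (\<bar>c\<bar> * Bg) * (c\<^sup>2 * Bg\<^sup>2 * t\<^sup>2))"
      using f_bound[of x] order.trans[OF abs_ge_zero f_bound[of x]]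
      by (intro mult_mono) auto
    then show ?thesis
      by (simp add: K_def abs_mult ac_simps)
  qed
  have integrable_bounded: "integrable M h" if "h \<in> borel_measurable M" "\<And>x. \<bar>h x\<bar> \<le> B"
    for h :: "'a \<Rightarrow> real" and B
    using that by (intro integrable_const_bound[where B=B]) auto
  have "\<bar>exp (c * t * g x) * f x\<bar> \<le> exp (\<bar>c\<bar> * Bg) * Bf" for x
  proof -
    have "c * t * g x \<le> \<bar>c\<bar> * Bg"
      using abs_ctg[of x] by linarith
    then show ?thesis
      using f_bound[of x] by (simp add: abs_mult mult_mono)
  qed
  then have "integrable M (\<lambda>x. exp (c * t * g x) * f x)"
    by (intro integrable_bounded) auto
  moreover have "integrable M f"
    using f_bound by (intro integrable_bounded) auto
  moreover have "integrable M (\<lambda>x. f x * g x)"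
    using f_bound g_bound
    by (intro integrable_bounded[where B="Bf * Bg"]) (auto simp: abs_mult mult_mono')
  ultimately have "(\<integral>x. exp (c * t * g x) * f x \<partial>M) - (\<integral>x. exp (c * 0 * g x) * f x \<partial>M)
        - t * (c * (\<integral>x. f x * g x \<partial>M))
      = (\<integral>x. f x * (exp (c * t * g x) - 1 - c * t * g x) \<partial>M)"
    by (simp add: algebra_simps)
  also have "\<bar>\<dots>\<bar> \<le> K * t\<^sup>2 * measure M (space M)"
    by (intro abs_integral_le_bound_measure remainder_bound) measurable
  finally show "\<bar>(\<integral>x. exp (c * t * g x) * f x \<partial>M) - (\<integral>x. exp (c * 0 * g x) * f x \<partial>M)
        - t * (c * (\<integral>x. f x * g x \<partial>M))\<bar> \<le> K * measure M (space M) * t\<^sup>2"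
    by (simp add: algebra_simps)
qed

lemma has_real_derivative_vec_comp:
  fixes q :: "real^'n \<Rightarrow> real" and F :: "'n \<Rightarrow> real \<Rightarrow> real"
  assumes q: "q differentiable (at (\<chi> j. F j 0))"
    and F: "\<And>j. (F j has_real_derivative d j) (at 0)"
  shows "((\<lambda>t. q (\<chi> j. F j t)) has_real_derivative
           (\<Sum>i\<in>UNIV. partial_q q i (\<chi> j. F j 0) * d i)) (at 0)"
proof -
  let ?v = "\<chi> j. d j" and ?x = "\<chi> j. F j 0" and ?q' = "frechet_derivative q (at (\<chi> j. F j 0))"
  have "((\<lambda>t. \<chi> j. F j t) has_derivative (\<lambda>t. t *\<^sub>R ?v)) (at 0)"
  proof (rule has_derivative_componentwise_within[THEN iffD2], intro ballI)
    fix b :: "real^'n" assume "b \<in> Basis"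
    then obtain i where "b = axis i 1" by (auto simp: Basis_vec_def)
    moreover have "(F i has_derivative (\<lambda>t. t * d i)) (at 0)"
      using F[of i] by (simp add: has_field_derivative_def mult.commute[of _ "d i"])
    ultimately show "((\<lambda>t. (\<chi> j. F j t) \<bullet> b) has_derivative (\<lambda>t. (t *\<^sub>R ?v) \<bullet> b)) (at 0)"
      by (simp add: inner_axis)
  qed
  moreover have q': "(q has_derivative ?q') (at ?x)"
    using q by (simp add: frechet_derivative_works)
  ultimately have "((\<lambda>t. q (\<chi> j. F j t)) has_derivative (\<lambda>t. ?q' (t *\<^sub>R ?v))) (at 0)"
    using has_derivative_compose by fastforce
  moreover have "(\<lambda>t. ?q' (t *\<^sub>R ?v)) = (*) (\<Sum>i\<in>UNIV. partial_q q i ?x * d i)"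
  proof
    fix t :: real
    interpret linear ?q' using q' by (rule has_derivative_linear)
    have "?v = (\<Sum>i\<in>UNIV. d i *\<^sub>R axis i 1)"
      using basis_expansion[of ?v] by (simp add: scalar_mult_eq_scaleR)
    then show "?q' (t *\<^sub>R ?v) = (\<Sum>i\<in>UNIV. partial_q q i ?x * d i) * t"
      by (simp add: scale sum partial_q_def sum_distrib_right mult.commute)
  qed
  ultimately show ?thesis
    by (simp add: has_field_derivative_def)
qed

lemma C2_fun_differentiable: "C2_fun q \<Longrightarrow> q differentiable (at x)"
  unfolding C2_fun_def differentiable_def by blast

lemma continuous_on_partial_q:
  assumes "C2_fun q"
  shows "continuous_on UNIV (partial_q q i)"
proof -
  obtain D D2 where D: "\<And>x. (q has_derivative blinfun_apply (D x)) (at x)"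
    and D2: "\<And>x. (D has_derivative blinfun_apply (D2 x)) (at x)"
    using assms unfolding C2_fun_def by blast
  have "continuous_on UNIV D"
    using D2 by (intro has_derivative_continuous_on) blast
  moreover have "partial_q q i = (\<lambda>x. blinfun_apply (D x) (axis i 1))"
    using frechet_derivative_at[OF D] by (auto simp: partial_q_def)
  ultimately show ?thesis
    using continuous_on_blinfun_matrix[of UNIV D "axis i 1" 1] by simp
qed

lemma partial_q_eq_0_outside_support:
  assumes "x \<notin> closure {y. q y \<noteq> 0}"
  shows "partial_q q i x = 0"
proof -
  have q0: "q y = 0" if "y \<notin> closure {y. q y \<noteq> 0}" for y
    using that closure_subset[of "{y. q y \<noteq> 0}"] by auto
  have "(q has_derivative (\<lambda>_. 0)) (at x)"
  proof (rule has_derivative_transform_within_open[OF has_derivative_const])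
    show "open (- closure {y. q y \<noteq> 0})"
      by (rule open_Compl) (rule closed_closure)
    show "x \<in> - closure {y. q y \<noteq> 0}"
      using assms by simp
    fix y assume "y \<in> - closure {y. q y \<noteq> 0}"
    then show "0 = q y"
      using q0[of y] by simp
  qed
  then have "frechet_derivative q (at x) = (\<lambda>_. 0)"
    by (rule frechet_derivative_at[symmetric])
  then show ?thesis
    by (simp add: partial_q_def)
qed

lemma supp_class_C_support_bounded:
  fixes q :: "real^'n \<Rightarrow> real"
  assumes "supp_class_C q i0"
  obtains b where "compact (closure {x. q x \<noteq> 0})"
    and "\<And>x. x \<in> closure {x. q x \<noteq> 0} \<Longrightarrow> x $ i0 \<le> b"
proof -
  let ?S = "closure {x. q x \<noteq> 0}"
  obtain \<epsilon> K where "\<epsilon> > 0" "compact K" and supp: "?S \<subseteq>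
      {x. \<epsilon> < x $ i0 \<and> x $ i0 < 1 / \<epsilon> \<and> (\<chi> j. if j = i0 then 0 else x $ j) \<in> K}"
    using assms unfolding supp_class_C_def by blast
  obtain BK where BK: "\<And>y. y \<in> K \<Longrightarrow> norm y \<le> BK"
    using compact_imp_bounded[OF \<open>compact K\<close>] unfolding bounded_iff by blast
  have "\<bar>x $ j\<bar> \<le> BK + 1 / \<epsilon>" if "x \<in> ?S" for x j
  proof -
    let ?y = "\<chi> j. if j = i0 then 0 else x $ j"
    have "\<epsilon> < x $ i0" "x $ i0 < 1 / \<epsilon>" "?y \<in> K"
      using that supp by auto
    moreover have "\<bar>?y $ j\<bar> \<le> norm ?y"
      by (rule component_le_norm_cart)
    moreover have "0 \<le> BK"
      using BK[of ?y] \<open>?y \<in> K\<close> norm_ge_zero[of ?y] by linarith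
    ultimately show ?thesis
      using BK[of ?y] \<open>\<epsilon> > 0\<close> by (cases "j = i0") (auto split: if_splits)
  qed
  then have "norm x \<le> CARD('n) * (BK + 1 / \<epsilon>)" if "x \<in> ?S" for x
  proof -
    have "norm x \<le> (\<Sum>j\<in>UNIV. \<bar>x $ j\<bar>)"
      by (rule norm_le_l1_cart)
    also have "\<dots> \<le> (\<Sum>j\<in>(UNIV :: 'n set). BK + 1 / \<epsilon>)"
      using that \<open>\<And>x j. x \<in> ?S \<Longrightarrow> \<bar>x $ j\<bar> \<le> BK + 1 / \<epsilon>\<close> by (intro sum_mono) blast
    finally show ?thesis
      by simp
  qed
  then have "compact ?S"
    unfolding compact_eq_bounded_closed bounded_iff by blast
  moreover have "x $ i0 \<le> 1 / \<epsilon>" if "x \<in> ?S" for x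
    using that supp by fastforce
  ultimately show ?thesis
    using that by blast
qed

locale gmc_setting =
  fixes \<omega> :: "'m::topological_space measure" and \<mu> :: "'f::real_vector measure"
    and Mg :: "'f \<Rightarrow> 'm measure" and E :: "('m \<Rightarrow> real) set"
    and \<iota> :: "('m \<Rightarrow> real) \<Rightarrow> 'f" and \<gamma> :: real
  assumes M_compact: "compact (UNIV :: 'm set)"
    and omega_finite: "finite_measure \<omega>" and sets_omega: "sets \<omega> = sets borel"
    and omega_pos: "emeasure \<omega> UNIV > 0"
    and Mg_finite: "\<And>\<psi>. finite_measure (Mg \<psi>)" and sets_Mg: "\<And>\<psi>. sets (Mg \<psi>) = sets borel"
    and E_add: "\<And>f g. f \<in> E \<Longrightarrow> g \<in> E \<Longrightarrow> (\<lambda>x. f x + g x) \<in> E"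
    and E_scale: "\<And>f c. f \<in> E \<Longrightarrow> (\<lambda>x. c * f x) \<in> E"
    and E_const: "\<And>c. (\<lambda>_. c) \<in> E"
    and iota_add: "\<And>f g. f \<in> E \<Longrightarrow> g \<in> E \<Longrightarrow> \<iota> (\<lambda>x. f x + g x) = \<iota> f + \<iota> g"
    and iota_scale: "\<And>f c. f \<in> E \<Longrightarrow> \<iota> (\<lambda>x. c * f x) = c *\<^sub>R \<iota> f"
    and Mg_shift: "AE \<psi> in \<mu>. \<forall>h\<in>E. (\<integral>x. h x \<partial>\<omega>) = 0 \<longrightarrow>
                     Mg (\<psi> + \<iota> h) = density (Mg \<psi>) (\<lambda>x. ennreal (exp (\<gamma> * h x)))"
    and Mg_const: "\<And>\<psi> c. Mg (\<psi> + \<iota> (\<lambda>_. c)) = density (Mg \<psi>) (\<lambda>_. ennreal (exp (\<gamma> * c)))"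
begin

definition shift_rule :: "'f \<Rightarrow> bool" where
  "shift_rule \<psi> \<longleftrightarrow> (\<forall>g\<in>E. (\<integral>x. g x \<partial>\<omega>) = 0 \<longrightarrow>
     Mg (\<psi> + \<iota> g) = density (Mg \<psi>) (\<lambda>x. ennreal (exp (\<gamma> * g x))))"

lemma AE_shift_rule: "AE \<psi> in \<mu>. shift_rule \<psi>"
  using Mg_shift unfolding shift_rule_def .

lemma continuous_bounded:
  fixes f :: "'m \<Rightarrow> real"
  assumes "continuous_on UNIV f"
  obtains B where "\<And>x. \<bar>f x\<bar> \<le> B"
  using compact_imp_bounded[OF compact_continuous_image[OF assms M_compact]]
  unfolding bounded_real by blast

lemma measurable_continuous:
  fixes f :: "'m \<Rightarrow> real"
  assumes "continuous_on UNIV f"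
  shows measurable_Mg_continuous: "f \<in> borel_measurable (Mg \<psi>)"
    and measurable_omega_continuous: "f \<in> borel_measurable \<omega>"
  using borel_measurable_continuous_onI[OF assms] sets_Mg sets_omega
  by (auto cong: measurable_cong_sets)

lemma Mg_add_scaleR:
  assumes \<psi>: "shift_rule \<psi>"
    and h: "h \<in> E" "continuous_on UNIV h"
  shows "Mg (\<psi> + t *\<^sub>R \<iota> h) = density (Mg \<psi>) (\<lambda>x. ennreal (exp (\<gamma> * t * h x)))"
proof -
  interpret \<omega>: finite_measure \<omega> by (rule omega_finite)
  have space_omega: "space \<omega> = UNIV"
    using sets_eq_imp_space_eq[OF sets_omega] by simp
  have "0 < measure \<omega> UNIV"
    using omega_pos \<omega>.emeasure_eq_measure by simp
  obtain B where "\<And>x. \<bar>h x\<bar> \<le> B"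
    using continuous_bounded[OF h(2)] by blast
  then have "integrable \<omega> h"
    using measurable_omega_continuous[OF h(2)] by (intro \<omega>.integrable_const_bound) auto
  have [measurable]: "h \<in> borel_measurable (Mg \<psi>)"
    by (rule measurable_Mg_continuous[OF h(2)])
  define c where "c = (\<integral>x. h x \<partial>\<omega>) / measure \<omega> UNIV"
  define g where "g x = t * (h x + - c)" for x
  have "g \<in> E"
    unfolding g_def by (intro E_scale E_add h E_const)
  moreover have "(\<integral>x. g x \<partial>\<omega>) = 0"
    using \<open>integrable \<omega> h\<close> \<open>0 < measure \<omega> UNIV\<close> by (simp add: g_def c_def space_omega)
  ultimately have shift_g: "Mg (\<psi> + \<iota> g) = density (Mg \<psi>) (\<lambda>x. ennreal (exp (\<gamma> * g x)))"
    using \<psi> unfolding shift_rule_def by blast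
  have "t *\<^sub>R \<iota> h = \<iota> (\<lambda>x. g x + t * c)"
    using iota_scale[OF h(1)] by (simp add: g_def algebra_simps)
  also have "\<dots> = \<iota> g + \<iota> (\<lambda>_. t * c)"
    by (rule iota_add[OF \<open>g \<in> E\<close> E_const])
  finally have "Mg (\<psi> + t *\<^sub>R \<iota> h)
      = density (Mg (\<psi> + \<iota> g)) (\<lambda>_. ennreal (exp (\<gamma> * (t * c))))"
    using Mg_const[of "\<psi> + \<iota> g" "t * c"] by (simp add: add.assoc)
  also have "\<dots> = density (Mg \<psi>) (\<lambda>x. ennreal (exp (\<gamma> * g x)) * ennreal (exp (\<gamma> * (t * c))))"
    unfolding shift_g g_def by (intro density_density_eq) measurable
  also have "(\<lambda>x. ennreal (exp (\<gamma> * g x)) * ennreal (exp (\<gamma> * (t * c))))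
      = (\<lambda>x. ennreal (exp (\<gamma> * t * h x)))"
  proof
    fix x
    have "\<gamma> * g x + \<gamma> * (t * c) = \<gamma> * t * h x"
      by (simp add: g_def algebra_simps)
    then show "ennreal (exp (\<gamma> * g x)) * ennreal (exp (\<gamma> * (t * c))) = ennreal (exp (\<gamma> * t * h x))"
      by (simp add: exp_add[symmetric] ennreal_mult[symmetric])
  qed
  finally show ?thesis .
qed

lemma integral_Mg_add_scaleR:
  assumes \<psi>: "shift_rule \<psi>"
    and h: "h \<in> E" "continuous_on UNIV h" and f: "continuous_on UNIV f"
  shows "(\<integral>x. f x \<partial>Mg (\<psi> + t *\<^sub>R \<iota> h)) = (\<integral>x. exp (\<gamma> * t * h x) * f x \<partial>Mg \<psi>)"
  unfolding Mg_add_scaleR[OF assms(1-3)]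
  using measurable_Mg_continuous[OF h(2)] measurable_Mg_continuous[OF f]
  by (subst integral_density) auto

lemma cyl_functional_has_real_derivative:
  fixes q :: "real^'n \<Rightarrow> real" and hs :: "'n \<Rightarrow> 'm \<Rightarrow> real"
  assumes q: "\<And>x. q differentiable (at x)" and hs: "\<And>i. continuous_on UNIV (hs i)"
    and h: "h \<in> E" "continuous_on UNIV h"
  shows "AE \<psi> in \<mu>.
    ((\<lambda>t. cyl_functional q hs Mg (\<psi> + t *\<^sub>R \<iota> h)) has_real_derivative
       \<gamma> * (\<Sum>i\<in>UNIV. partial_q q i (\<chi> j. integral\<^sup>L (Mg \<psi>) (hs j))
                * integral\<^sup>L (Mg \<psi>) (\<lambda>x. hs i x * h x))) (at 0)"
  using AE_shift_rule
proof eventually_elim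
  case (elim \<psi>)
  interpret Mg\<psi>: finite_measure "Mg \<psi>" by (rule Mg_finite)
  define F where "F j t = (\<integral>x. exp (\<gamma> * t * h x) * hs j x \<partial>Mg \<psi>)" for j t
  obtain Bh where Bh: "\<And>x. \<bar>h x\<bar> \<le> Bh"
    using continuous_bounded[OF h(2)] by blast
  have "(F j has_real_derivative \<gamma> * (\<integral>x. hs j x * h x \<partial>Mg \<psi>)) (at 0)" for j
  proof -
    obtain B where "\<And>x. \<bar>hs j x\<bar> \<le> B"
      using continuous_bounded[OF hs] by blast
    then show ?thesis
      unfolding F_def using Bh measurable_Mg_continuous hs h(2)
      by (intro Mg\<psi>.has_real_derivative_integral_exp_mult) auto
  qed
  then have "((\<lambda>t. q (\<chi> j. F j t)) has_real_derivative
      (\<Sum>i\<in>UNIV. partial_q q i (\<chi> j. F j 0) * (\<gamma> * (\<integral>x. hs i x * h x \<partial>Mg \<psi>)))) (at 0)"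
    by (intro has_real_derivative_vec_comp q)
  moreover have "cyl_functional q hs Mg (\<psi> + t *\<^sub>R \<iota> h) = q (\<chi> j. F j t)" for t
    unfolding cyl_functional_def F_def using integral_Mg_add_scaleR[OF elim h hs] by simp
  ultimately show ?case
    by (simp add: F_def sum_distrib_left ac_simps)
qed

lemma cyl_derivative_formula_bounded:
  fixes q :: "real^'n \<Rightarrow> real" and hs :: "'n \<Rightarrow> 'm \<Rightarrow> real"
  assumes q: "C2_fun q" "supp_class_C q i0"
    and hs: "\<And>i. continuous_on UNIV (hs i)" "hs i0 = (\<lambda>_. 1)"
    and h: "continuous_on UNIV h"
  obtains C where "\<And>\<psi>. \<bar>\<gamma> * (\<Sum>i\<in>UNIV. partial_q q i (\<chi> j. integral\<^sup>L (Mg \<psi>) (hs j))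
                                * integral\<^sup>L (Mg \<psi>) (\<lambda>x. hs i x * h x))\<bar> \<le> C"
proof -
  let ?S = "closure {x. q x \<noteq> 0}"
  obtain b where "compact ?S" and b: "\<And>x. x \<in> ?S \<Longrightarrow> x $ i0 \<le> b"
    using supp_class_C_support_bounded[OF q(2)] by blast
  have "\<exists>B. \<forall>x\<in>?S. \<bar>partial_q q i x\<bar> \<le> B" for i
    using compact_imp_bounded[OF compact_continuous_image[OF
          continuous_on_subset[OF continuous_on_partial_q[OF q(1)]] \<open>compact ?S\<close>]]
    unfolding bounded_real by blast
  then obtain Bq where Bq: "\<And>i x. x \<in> ?S \<Longrightarrow> \<bar>partial_q q i x\<bar> \<le> Bq i"
    by metis
  have "\<exists>B. \<forall>x. \<bar>hs i x * h x\<bar> \<le> B" for i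
    using continuous_bounded[of "\<lambda>x. hs i x * h x"] hs(1) h
    by (metis continuous_on_mult)
  then obtain Bh where Bh: "\<And>i x. \<bar>hs i x * h x\<bar> \<le> Bh i"
    by metis
  define C where "C = \<bar>\<gamma>\<bar> * (\<Sum>i\<in>UNIV. \<bar>Bq i\<bar> * (\<bar>Bh i\<bar> * \<bar>b\<bar>))"
  have "\<bar>\<gamma> * (\<Sum>i\<in>UNIV. partial_q q i x * integral\<^sup>L (Mg \<psi>) (\<lambda>x. hs i x * h x))\<bar> \<le> C"
    if x: "x = (\<chi> j. integral\<^sup>L (Mg \<psi>) (hs j))" for x \<psi>
  proof (cases "x \<in> ?S")
    case False
    then show ?thesis
      using partial_q_eq_0_outside_support[OF False] by (simp add: C_def sum_nonneg)
  next
    case True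
    interpret Mg\<psi>: finite_measure "Mg \<psi>" by (rule Mg_finite)
    have "measure (Mg \<psi>) (space (Mg \<psi>)) \<le> b"
      using b[OF True] by (simp add: x hs(2))
    have "\<bar>integral\<^sup>L (Mg \<psi>) (\<lambda>x. hs i x * h x)\<bar> \<le> \<bar>Bh i\<bar> * \<bar>b\<bar>" for i
    proof -
      have "\<bar>integral\<^sup>L (Mg \<psi>) (\<lambda>x. hs i x * h x)\<bar> \<le> \<bar>Bh i\<bar> * measure (Mg \<psi>) (space (Mg \<psi>))"
        using hs(1) h
        by (intro Mg\<psi>.abs_integral_le_bound_measure measurable_Mg_continuous continuous_on_mult)
           (auto intro: order.trans[OF Bh abs_ge_self])
      also have "\<dots> \<le> \<bar>Bh i\<bar> * \<bar>b\<bar>"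
        using \<open>measure (Mg \<psi>) (space (Mg \<psi>)) \<le> b\<close> by (intro mult_left_mono) auto
      finally show ?thesis .
    qed
    then have "(\<Sum>i\<in>UNIV. \<bar>partial_q q i x * integral\<^sup>L (Mg \<psi>) (\<lambda>x. hs i x * h x)\<bar>)
        \<le> (\<Sum>i\<in>UNIV. \<bar>Bq i\<bar> * (\<bar>Bh i\<bar> * \<bar>b\<bar>))"
      unfolding abs_mult
      by (intro sum_mono mult_mono) (auto intro: order.trans[OF Bq[OF True] abs_ge_self])
    then show ?thesis
      using order.trans[OF sum_abs] unfolding C_def abs_mult[of \<gamma>]
      by (intro mult_left_mono) auto
  qed
  then show ?thesis
    using that by blast
qed

lemma dir_deriv_cyl_functional_bounded:
  fixes q :: "real^'n \<Rightarrow> real" and hs :: "'n \<Rightarrow> 'm \<Rightarrow> real"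
  assumes q: "C2_fun q" "supp_class_C q i0"
    and hs: "\<And>i. continuous_on UNIV (hs i)" "hs i0 = (\<lambda>_. 1)"
    and h: "h \<in> E" "continuous_on UNIV h"
  shows "\<exists>C. AE \<psi> in \<mu>. \<bar>dir_deriv (cyl_functional q hs Mg) (\<iota> h) \<psi>\<bar> \<le> C"
proof -
  obtain C where C: "\<And>\<psi>. \<bar>\<gamma> * (\<Sum>i\<in>UNIV. partial_q q i (\<chi> j. integral\<^sup>L (Mg \<psi>) (hs j))
                                   * integral\<^sup>L (Mg \<psi>) (\<lambda>x. hs i x * h x))\<bar> \<le> C"
    using cyl_derivative_formula_bounded[where hs=hs, OF q hs h(2)] by blast
  have "AE \<psi> in \<mu>. \<bar>dir_deriv (cyl_functional q hs Mg) (\<iota> h) \<psi>\<bar> \<le> C"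
    using cyl_functional_has_real_derivative[where hs=hs, OF C2_fun_differentiable[OF q(1)] hs(1) h]
  proof eventually_elim
    case (elim \<psi>)
    then show ?case
      using C unfolding dir_deriv_def by (simp add: DERIV_imp_deriv)
  qed
  then show ?thesis
    by blast
qed

end

theorem mainTheorem9:
  fixes n :: nat and \<gamma> :: real
    and \<omega> :: "'m::metric_space measure"          \<comment> \<open>volume measure omega_ref\<close>
    and \<mu> :: "'f::real_vector measure"             \<comment> \<open>Gaussian field measure mu_ref\<close>
    and Mg :: "'f \<Rightarrow> 'm measure"                 \<comment> \<open>GMC map M^gamma_ref\<close>
    and E :: "('m \<Rightarrow> real) set"                  \<comment> \<open>E = H^{n/2}_ref\<close>
    and Cinf :: "('m \<Rightarrow> real) set"               \<comment> \<open>smooth functions C^infinity(M)\<close>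
    and \<iota> :: "('m \<Rightarrow> real) \<Rightarrow> 'f"               \<comment> \<open>embedding of E into field space\<close>
    and q :: "real^'n \<Rightarrow> real" and hs :: "'n \<Rightarrow> 'm \<Rightarrow> real" and i0 :: 'n
  assumes dim: "even n" "n > 0"
    and gamma: "0 \<le> \<gamma>" "\<gamma> < sqrt (2 * real n)"
    and M_compact: "compact (UNIV :: 'm set)"
    and omega: "finite_measure \<omega>" "sets \<omega> = sets borel" "emeasure \<omega> UNIV > 0"
    and mu: "prob_space \<mu>"
    and Mg_meas: "\<And>\<psi>. finite_measure (Mg \<psi>) \<and> sets (Mg \<psi>) = sets borel"
    and Cinf_cont: "\<And>f. f \<in> Cinf \<Longrightarrow> continuous_on UNIV f"
    and Cinf_E: "Cinf \<subseteq> E"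
    and E_add: "\<And>f g. f \<in> E \<Longrightarrow> g \<in> E \<Longrightarrow> (\<lambda>x. f x + g x) \<in> E"
    and E_scale: "\<And>f c. f \<in> E \<Longrightarrow> (\<lambda>x. c * f x) \<in> E"
    and E_const: "\<And>c. (\<lambda>_. c) \<in> E"
    and iota_add: "\<And>f g. f \<in> E \<Longrightarrow> g \<in> E \<Longrightarrow> \<iota> (\<lambda>x. f x + g x) = \<iota> f + \<iota> g"
    and iota_scale: "\<And>f c. f \<in> E \<Longrightarrow> \<iota> (\<lambda>x. c * f x) = c *\<^sub>R \<iota> f"
    and Mg_shift: "AE \<psi> in \<mu>. \<forall>h\<in>E. (\<integral>x. h x \<partial>\<omega>) = 0 \<longrightarrow>
                     Mg (\<psi> + \<iota> h) = density (Mg \<psi>) (\<lambda>x. ennreal (exp (\<gamma> * h x)))"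
    and Mg_const: "\<And>\<psi> c. Mg (\<psi> + \<iota> (\<lambda>_. c)) = density (Mg \<psi>) (\<lambda>_. ennreal (exp (\<gamma> * c)))"
    and q_C2: "C2_fun q"
    and hs_smooth: "\<And>i. hs i \<in> Cinf"
    and h0: "hs i0 = (\<lambda>_. 1)"
  shows
    "(\<forall>h\<in>E. continuous_on UNIV h \<longrightarrow>
        (AE \<psi> in \<mu>.
          ((\<lambda>t. cyl_functional q hs Mg (\<psi> + t *\<^sub>R \<iota> h)) has_real_derivative
             \<gamma> * (\<Sum>i\<in>UNIV. partial_q q i (\<chi> j. integral\<^sup>L (Mg \<psi>) (hs j))
                      * integral\<^sup>L (Mg \<psi>) (\<lambda>x. hs i x * h x))) (at 0)))
     \<and> (supp_class_C q i0 \<longrightarrow>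
        (\<forall>h\<in>E. continuous_on UNIV h \<longrightarrow>
           (\<exists>C. AE \<psi> in \<mu>. \<bar>dir_deriv (cyl_functional q hs Mg) (\<iota> h) \<psi>\<bar> \<le> C)))"
proof -
  interpret gmc_setting \<omega> \<mu> Mg E \<iota> \<gamma>
    by (rule gmc_setting.intro)
       (fact M_compact omega Mg_meas[THEN conjunct1] Mg_meas[THEN conjunct2] E_add E_scale E_const
          iota_add iota_scale Mg_shift Mg_const)+
  have hs_cont: "\<And>i. continuous_on UNIV (hs i)"
    using Cinf_cont hs_smooth by blast
  show ?thesis
    using cyl_functional_has_real_derivative[where hs=hs, OF C2_fun_differentiable[OF q_C2] hs_cont]
      dir_deriv_cyl_functional_bounded[where hs=hs, OF q_C2 _ hs_cont h0]
    by blast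
qed

end
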